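(* Fix integers $d,n$ with $d+2\leq n\leq 2d$ and $\tau>0$. Let $W=\{w_k\}_{k\in[n]}$ be a minimizer of $\mathcal{L}^{(\tau)}_{\mathrm{CE}}(W,W)$ subject to $W\in\operatorname{SMC}(d,n)$, and let $S_0\sqcup S_1\sqcup\cdots\sqcup S_l=[n]$ be any partition (with $S_0$ possibly empty and $l\geq n-d$) such that (a) $|S_0|=\dim\operatorname{span}\{w_k\}_{k\in S_0}$, (b) $|S_j|=\dim\operatorname{span}\{w_k\}_{k\in S_j}+1$ for each $j\in[l]$, and (c) $\operatorname{span}\{w_k\}_{k\in S_j}\perp\operatorname{span}\{w_k\}_{k\in S_{j'}}$ whenever $j\neq j'$ (with $j,j'\in\{0,1,\ldots,l\}$). Then $S_0$ is empty, $W$ spans $\mathbb{R}^d$, and $l=n-d$.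
   Context: $[n]=\{1,\ldots,n\}$. For a configuration $X=\{x_i\}_{i\in[n]}$ in the unit sphere $S^{d-1}$, $\delta(X):=\min_{j\in[n]}\operatorname{dist}(x_j,\operatorname{conv}\{x_i\}_{i\neq j})$; $\operatorname{SMC}(d,n)$ is the set of $n$-point configurations in $S^{d-1}$ maximizing $\delta$ (softmax codes). For $\tau>0$, $\mathcal{L}^{(\tau)}_{\mathrm{CE}}(W,W):=\frac{1}{n}\sum_{k=1}^n-\log\Big(\frac{\exp(\langle w_k,w_k\rangle/\tau)}{\sum_{j=1}^n\exp(\langle w_j,w_k\rangle/\tau)}\Big)$. (In this regime every softmax code admits such a partition.) *)

theory Defs
  imports "HOL-Analysis.Analysis"
begin

text \<open>An n-point configuration X = (w 1, ..., w n) in the unit sphere S^(d-1) of R^d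
  (d = CARD('d)); values of w outside {1..n} are irrelevant.\<close>
definition sphere_config :: "nat \<Rightarrow> (nat \<Rightarrow> real^'d) \<Rightarrow> bool" where
  "sphere_config n w \<longleftrightarrow> (\<forall>k\<in>{1..n}. norm (w k) = 1)"

definition delta_cfg :: "nat \<Rightarrow> (nat \<Rightarrow> real^'d) \<Rightarrow> real" where
  "delta_cfg n w = Min ((\<lambda>j. infdist (w j) (convex hull (w ` ({1..n} - {j})))) ` {1..n})"

definition SMC :: "nat \<Rightarrow> (nat \<Rightarrow> real^'d) \<Rightarrow> bool" where
  "SMC n w \<longleftrightarrow> sphere_config n w \<and>
     (\<forall>v :: nat \<Rightarrow> real^'d. sphere_config n v \<longrightarrow> delta_cfg n v \<le> delta_cfg n w)"

definition CE_loss :: "real \<Rightarrow> nat \<Rightarrow> (nat \<Rightarrow> real^'d) \<Rightarrow> real" where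
  "CE_loss \<tau> n w = (1 / real n) * (\<Sum>k\<in>{1..n}.
      - ln (exp (inner (w k) (w k) / \<tau>) / (\<Sum>j\<in>{1..n}. exp (inner (w j) (w k) / \<tau>))))"

end

theory Submission
  imports Defs
begin

text \<open>
  For \<open>d + 2 \<le> n \<le> 2d\<close> the optimal separation is \<open>\<delta> = 1\<close>: \<open>n \<ge> d + 2\<close> unit vectors are
  affinely dependent, which puts some point within distance \<open>1\<close> of the hull of the others, and
  the cross-polytope attains \<open>1\<close>. So softmax codes are the unit configurations with \<open>\<delta> \<ge> 1\<close>.
  In such a code a block \<open>S\<^sub>j\<close> (\<open>j \<ge> 1\<close>) has more points than dimensions, hence \<open>0\<close> in its
  convex hull; as there are at least two such blocks, all inner products are \<open>\<le> 0\<close>.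
  Counting gives \<open>n = dim span W + l\<close>. If \<open>S\<^sub>0 \<noteq> {}\<close> or \<open>W\<close> does not span, two blocks fit,
  as one regular simplex, into the orthogonal complement of the remaining points. This is again
  a softmax code, and by Jensen's inequality and the strict convexity of \<open>exp\<close> its loss is
  strictly smaller, contradicting minimality.
\<close>

section \<open>Separation of unit configurations\<close>

definition nonacute_config :: "nat \<Rightarrow> (nat \<Rightarrow> 'a::real_inner) \<Rightarrow> bool" where
  "nonacute_config n w \<longleftrightarrow> (\<forall>i\<in>{1..n}. \<forall>k\<in>{1..n}. i \<noteq> k \<longrightarrow> inner (w i) (w k) \<le> 0)"

lemma delta_cfg_le_infdist:
  "i \<in> {1..n} \<Longrightarrow> delta_cfg n w \<le> infdist (w i) (convex hull (w ` ({1..n} - {i})))"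
  unfolding delta_cfg_def by (rule Min_le) auto

lemma le_delta_cfg_iff:
  "1 \<le> n \<Longrightarrow>
    r \<le> delta_cfg n w \<longleftrightarrow> (\<forall>i\<in>{1..n}. r \<le> infdist (w i) (convex hull (w ` ({1..n} - {i}))))"
  unfolding delta_cfg_def by (subst Min_ge_iff) auto

lemma dist_ge_1_if_delta_cfg_ge_1:
  assumes "1 \<le> delta_cfg n w" "i \<in> {1..n}" "y \<in> convex hull (w ` ({1..n} - {i}))"
  shows "1 \<le> dist (w i) y"
  using assms delta_cfg_le_infdist[OF assms(2), of w] infdist_le[OF assms(3), of "w i"] by linarith

lemma one_le_infdist_if_inner_nonpos:
  fixes x :: "'a::real_inner"
  assumes "norm x = 1" "A \<noteq> {}" "\<forall>a\<in>A. inner x a \<le> 0"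
  shows "1 \<le> infdist x A"
  unfolding infdist_notempty[OF assms(2)]
proof (rule cINF_greatest[OF assms(2)])
  fix a assume "a \<in> A"
  then have "1 \<le> inner x (x - a)"
    using assms by (simp add: inner_diff_right dot_square_norm)
  also have "\<dots> \<le> norm x * norm (x - a)" by (rule norm_cauchy_schwarz)
  finally show "1 \<le> dist x a" using assms(1) by (simp add: dist_norm)
qed

lemma delta_cfg_ge_1_if_nonacute:
  fixes w :: "nat \<Rightarrow> real^'d"
  assumes sc: "sphere_config n w" and n: "2 \<le> n" and nonacute: "nonacute_config n w"
  shows "1 \<le> delta_cfg n w"
proof -
  have "1 \<le> infdist (w j) (convex hull (w ` ({1..n} - {j})))" if j: "j \<in> {1..n}" for j
  proof (rule one_le_infdist_if_inner_nonpos)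
    show "norm (w j) = 1" using sc j by (simp add: sphere_config_def)
    have "(if j = 1 then 2 else 1) \<in> {1..n} - {j}" using n by simp
    then show "convex hull (w ` ({1..n} - {j})) \<noteq> {}" by auto
    have "convex hull (w ` ({1..n} - {j})) \<subseteq> {y. inner (w j) y \<le> 0}"
      using nonacute j unfolding nonacute_config_def by (intro hull_minimal) (auto simp: convex_halfspace_le)
    then show "\<forall>a\<in>convex hull (w ` ({1..n} - {j})). inner (w j) a \<le> 0" by blast
  qed
  moreover have "1 \<le> n" using n by simp
  ultimately show ?thesis by (simp add: le_delta_cfg_iff)
qed

lemma exists_inner_ge_inner_self_if_in_hull:
  fixes z :: "'a::real_inner"
  assumes "z \<in> convex hull S"
  shows "\<exists>j\<in>S. inner z z \<le> inner j z"
proof (rule ccontr)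
  assume "\<not> ?thesis"
  then have "S \<subseteq> {x. inner z x < inner z z}" by (auto simp: inner_commute not_le)
  then have "convex hull S \<subseteq> {x. inner z x < inner z z}"
    by (rule hull_minimal) (rule convex_halfspace_lt)
  with assms show False by (metis less_irrefl mem_Collect_eq subsetD)
qed

lemma normalized_weighted_sum_in_convex_hull:
  fixes S :: "'a::real_vector set"
  assumes "finite S" "\<forall>x\<in>S. 0 \<le> u x" "sum u S > 0"
  shows "(1 / sum u S) *\<^sub>R (\<Sum>x\<in>S. u x *\<^sub>R x) \<in> convex hull S"
proof -
  have "(\<Sum>x\<in>S. (u x / sum u S) *\<^sub>R x) \<in> convex hull S"
    using assms by (intro convex_sum) (auto simp: sum_divide_distrib[symmetric] hull_inc)
  then show ?thesis by (simp add: scaleR_sum_right divide_inverse_commute)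
qed

lemma dist_unit_scaled_le_1:
  fixes j z :: "'a::real_inner"
  assumes "norm j = 1" "inner z z \<le> inner j z" "0 < t" "t \<le> 1"
  shows "dist j (t *\<^sub>R z) \<le> 1 \<and> (t *\<^sub>R z \<noteq> 0 \<longrightarrow> dist j (t *\<^sub>R z) < 1)"
proof -
  have "(dist j (t *\<^sub>R z))\<^sup>2 = inner (j - t *\<^sub>R z) (j - t *\<^sub>R z)"
    by (simp add: dist_norm dot_square_norm)
  also have "\<dots> = inner j j - 2 * t * inner j z + t\<^sup>2 * inner z z"
    by (simp add: inner_diff_left inner_diff_right inner_commute algebra_simps power2_eq_square)
  also have "\<dots> \<le> 1 - t * (2 - t) * inner z z"
    using assms by (simp add: dot_square_norm algebra_simps power2_eq_square)
  finally have d: "(dist j (t *\<^sub>R z))\<^sup>2 \<le> 1 - t * (2 - t) * inner z z" .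
  have "t * (2 - t) * inner z z \<ge> 0" using assms by simp
  with d have "(dist j (t *\<^sub>R z))\<^sup>2 \<le> 1\<^sup>2" by simp
  then have "dist j (t *\<^sub>R z) \<le> 1" by (rule power2_le_imp_le) simp
  moreover have "dist j (t *\<^sub>R z) < 1" if "t *\<^sub>R z \<noteq> 0"
  proof -
    have "t * (2 - t) * inner z z > 0" using that assms by simp
    with d have "(dist j (t *\<^sub>R z))\<^sup>2 < 1\<^sup>2" by simp
    then show ?thesis by (rule power2_less_imp_less) simp
  qed
  ultimately show ?thesis by blast
qed

text \<open>Writing the relation as
  \<open>\<Sum>\<^sub>P c v v = \<Sum>\<^sub>N (-c v) v = y\<^sub>0\<close>, the point \<open>z = y\<^sub>0 / \<beta>\<close> lies in the hull of \<open>N\<close> and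
  \<open>y = y\<^sub>0 / \<alpha> = t z\<close> (with \<open>t = \<beta> / \<alpha> \<in> (0,1]\<close>) in the hull of \<open>P\<close>, and some vertex \<open>j \<in> N\<close>
  satisfies \<open>\<langle>j,z\<rangle> \<ge> |z|\<^sup>2\<close>.\<close>
lemma exists_vertex_near_hull_of_relation:
  fixes Q :: "'a::real_inner set" and c :: "'a \<Rightarrow> real"
  assumes fin: "finite Q" and unit: "\<forall>v\<in>Q. norm v = 1"
    and rel: "(\<Sum>v\<in>Q. c v *\<^sub>R v) = 0" and nonneg: "sum c Q \<ge> 0" and neg: "\<exists>v\<in>Q. c v < 0"
  shows "\<exists>j\<in>Q. c j < 0 \<and>
    (\<exists>y\<in>convex hull {v\<in>Q. 0 < c v}. dist j y \<le> 1 \<and> (y \<noteq> 0 \<longrightarrow> dist j y < 1))"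
proof -
  define P N where "P = {v\<in>Q. 0 < c v}" and "N = {v\<in>Q. c v < 0}"
  have fin': "finite P" "finite N" and "N \<noteq> {}" using fin neg by (auto simp: P_def N_def)
  have split: "sum f Q = sum f P + sum f N"
    if "\<forall>v\<in>Q. c v = 0 \<longrightarrow> f v = 0" for f :: "'a \<Rightarrow> 'b::comm_monoid_add"
  proof -
    have "sum f Q = sum f (P \<union> N)"
      using fin that by (intro sum.mono_neutral_right) (auto simp: P_def N_def)
    also have "\<dots> = sum f P + sum f N"
      using fin' by (intro sum.union_disjoint) (auto simp: P_def N_def)
    finally show ?thesis .
  qed
  define \<alpha> \<beta> where "\<alpha> = sum c P" and "\<beta> = (\<Sum>v\<in>N. - c v)"
  define y0 where "y0 = (\<Sum>v\<in>P. c v *\<^sub>R v)"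
  have \<beta>: "\<beta> > 0" unfolding \<beta>_def using fin' \<open>N \<noteq> {}\<close> by (intro sum_pos) (auto simp: N_def)
  have "\<alpha> \<ge> \<beta>" using split[of c] nonneg by (simp add: \<alpha>_def \<beta>_def sum_negf)
  define t where "t = \<beta> / \<alpha>"
  have t: "0 < t" "t \<le> 1" using \<beta> \<open>\<alpha> \<ge> \<beta>\<close> by (auto simp: t_def)
  have y0N: "(\<Sum>v\<in>N. (- c v) *\<^sub>R v) = y0"
    using split[of "\<lambda>v. c v *\<^sub>R v"] rel by (simp add: y0_def sum_negf add_eq_0_iff)
  define z where "z = (1 / \<beta>) *\<^sub>R y0"
  have "z \<in> convex hull N"
    unfolding z_def y0N[symmetric] \<beta>_def
    by (rule normalized_weighted_sum_in_convex_hull[OF fin'(2)]) (use \<beta> in \<open>auto simp: N_def \<beta>_def\<close>)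
  then obtain j where j: "j \<in> N" "inner z z \<le> inner j z"
    using exists_inner_ge_inner_self_if_in_hull by blast
  have "t *\<^sub>R z = (1 / \<alpha>) *\<^sub>R y0" using \<beta> by (simp add: t_def z_def)
  also have "\<dots> \<in> convex hull P"
    unfolding y0_def \<alpha>_def
    by (rule normalized_weighted_sum_in_convex_hull[OF fin'(1)])
      (use \<beta> \<open>\<alpha> \<ge> \<beta>\<close> in \<open>auto simp: P_def \<alpha>_def\<close>)
  finally have "t *\<^sub>R z \<in> convex hull P" .
  moreover have "norm j = 1" using j unit by (simp add: N_def)
  then have "dist j (t *\<^sub>R z) \<le> 1 \<and> (t *\<^sub>R z \<noteq> 0 \<longrightarrow> dist j (t *\<^sub>R z) < 1)"
    using j(2) t by (rule dist_unit_scaled_le_1)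
  ultimately show ?thesis using j unfolding N_def P_def by blast
qed

lemma delta_cfg_le_1:
  fixes u :: "nat \<Rightarrow> real^'d"
  assumes sc: "sphere_config n u" and n: "CARD('d) + 2 \<le> n"
  shows "delta_cfg n u \<le> 1"
proof -
  have "\<exists>i\<in>{1..n}. \<exists>y\<in>convex hull (u ` ({1..n} - {i})). dist (u i) y \<le> 1"
  proof (cases "inj_on u {1..n}")
    case False
    then obtain i k where ik: "i \<in> {1..n}" "k \<in> {1..n}" "i \<noteq> k" "u i = u k"
      unfolding inj_on_def by blast
    then have "i \<in> {1..n} - {k}" by auto
    then have "u i \<in> convex hull (u ` ({1..n} - {k}))" by (intro hull_inc imageI)
    then show ?thesis using ik by (intro bexI[of _ k] bexI[of _ "u i"]) auto
  next
    case True
    define Q where "Q = u ` {1..n}"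
    have fin: "finite Q" and "card Q = n" using True by (auto simp: Q_def card_image)
    then have "affine_dependent Q" using n by (intro affine_dependent_biggerset) auto
    then obtain c where c: "sum c Q = 0" "\<exists>v\<in>Q. c v \<noteq> 0" "(\<Sum>v\<in>Q. c v *\<^sub>R v) = 0"
      using affine_dependent_explicit_finite[OF fin] by blast
    have "\<exists>v\<in>Q. c v < 0"
      using c(1,2) sum_nonneg_eq_0_iff[OF fin, of c] by (metis not_le order_less_le)
    moreover have "\<forall>v\<in>Q. norm v = 1" using sc by (auto simp: Q_def sphere_config_def)
    ultimately obtain j y where j: "j \<in> Q" "c j < 0"
      and y: "y \<in> convex hull {v\<in>Q. 0 < c v}" "dist j y \<le> 1"
      using exists_vertex_near_hull_of_relation[OF fin _ c(3)] c(1) by force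
    obtain i where i: "i \<in> {1..n}" "j = u i" using j by (auto simp: Q_def)
    have "{v\<in>Q. 0 < c v} \<subseteq> u ` ({1..n} - {i})" using i j by (auto simp: Q_def)
    then have "y \<in> convex hull (u ` ({1..n} - {i}))" using y(1) hull_mono by blast
    then show ?thesis using i y(2) by blast
  qed
  then obtain i y where i: "i \<in> {1..n}"
    and y: "y \<in> convex hull (u ` ({1..n} - {i}))" "dist (u i) y \<le> 1"
    by blast
  from y have "infdist (u i) (convex hull (u ` ({1..n} - {i}))) \<le> 1" by (rule infdist_le2)
  with delta_cfg_le_infdist[OF i] show ?thesis by (rule order_trans)
qed

text \<open>The cross-polytope \<open>\<plusminus>e\<^sub>i\<close>, truncated to \<open>n\<close> points.\<close>
lemma exists_nonacute_config:
  assumes "n \<le> 2 * CARD('d)"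
  shows "\<exists>u :: nat \<Rightarrow> real^'d. sphere_config n u \<and> nonacute_config n u"
proof -
  define d where "d = CARD('d)"
  obtain h where "bij_betw h (UNIV :: 'd set) {0..<d}"
    using ex_bij_betw_finite_nat[of "UNIV :: 'd set"] by (auto simp: d_def)
  then have inj: "inj_on (inv_into UNIV h) {0..<d}"
    by (simp add: bij_betw_def bij_betw_inv_into inj_on_inv_into)
  define e where "e i = axis (inv_into UNIV h i) (1::real)" for i
  define u where "u k = (if k \<le> d then e (k - 1) else - e (k - d - 1))" for k
  have e: "inner (e i) (e j) = 0" if "i < d" "j < d" "i \<noteq> j" for i j
    using inj_onD[OF inj, of i j] that by (auto simp: e_def inner_axis_axis)
  have "sphere_config n u" by (simp add: sphere_config_def u_def e_def norm_axis_1)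
  moreover have "nonacute_config n u"
    unfolding nonacute_config_def
  proof (intro ballI impI)
    fix i k assume ik: "i \<in> {1..n}" "k \<in> {1..n}" "i \<noteq> k"
    show "inner (u i) (u k) \<le> 0"
    proof (cases "i \<le> d"; cases "k \<le> d")
      assume "i \<le> d" "k \<le> d"
      then have "i - 1 < d" "k - 1 < d" "i - 1 \<noteq> k - 1" using ik by auto
      then show ?thesis using \<open>i \<le> d\<close> \<open>k \<le> d\<close> e by (simp add: u_def)
    next
      assume "\<not> i \<le> d" "\<not> k \<le> d"
      then have "i - d - 1 < d" "k - d - 1 < d" "i - d - 1 \<noteq> k - d - 1"
        using ik assms by (auto simp: d_def)
      then show ?thesis using \<open>\<not> i \<le> d\<close> \<open>\<not> k \<le> d\<close> e by (simp add: u_def)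
    qed (simp_all add: u_def e_def inner_axis_axis)
  qed
  ultimately show ?thesis by blast
qed

lemma SMC_iff_delta_cfg_ge_1:
  fixes w :: "nat \<Rightarrow> real^'d"
  assumes "CARD('d) + 2 \<le> n" "n \<le> 2 * CARD('d)"
  shows "SMC n w \<longleftrightarrow> sphere_config n w \<and> 1 \<le> delta_cfg n w"
proof -
  obtain u :: "nat \<Rightarrow> real^'d" where "sphere_config n u" "1 \<le> delta_cfg n u"
    using exists_nonacute_config[OF assms(2)] delta_cfg_ge_1_if_nonacute assms(1) by fastforce
  then show ?thesis
    unfolding SMC_def using delta_cfg_le_1[OF _ assms(1)] by (blast intro: order_trans)
qed

lemma inj_on_if_delta_cfg_ge_1:
  assumes "1 \<le> delta_cfg n w"
  shows "inj_on w {1..n}"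
proof (rule inj_onI, rule ccontr)
  fix i k assume ik: "i \<in> {1..n}" "k \<in> {1..n}" "w i = w k" "i \<noteq> k"
  then have "w k \<in> convex hull (w ` ({1..n} - {i}))" by (intro hull_inc) auto
  from dist_ge_1_if_delta_cfg_ge_1[OF assms ik(1) this] show False using ik by simp
qed

lemma zero_in_convex_hull_if_dim_less_card:
  fixes w :: "nat \<Rightarrow> real^'d"
  assumes d1: "1 \<le> delta_cfg n w" and sc: "sphere_config n w"
    and S: "S \<subseteq> {1..n}" and dim: "dim (w ` S) < card S"
  shows "0 \<in> convex hull (w ` S)"
proof -
  define Q where "Q = w ` S"
  have fin: "finite Q" using S finite_subset by (auto simp: Q_def)
  have "card Q = card S"
    using inj_on_subset[OF inj_on_if_delta_cfg_ge_1[OF d1] S] by (simp add: Q_def card_image)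
  then have "dependent Q" using dim independent_card_le_dim[of Q Q] by (auto simp: Q_def)
  then obtain u where u: "\<exists>v\<in>Q. u v \<noteq> 0" "(\<Sum>v\<in>Q. u v *\<^sub>R v) = 0"
    using dependent_finite[OF fin] by blast
  define c where "c = (if sum u Q \<ge> 0 then u else (\<lambda>v. - u v))"
  have c: "\<exists>v\<in>Q. c v \<noteq> 0" "(\<Sum>v\<in>Q. c v *\<^sub>R v) = 0" "sum c Q \<ge> 0"
    using u by (auto simp: c_def sum_negf)
  show ?thesis
  proof (cases "\<exists>v\<in>Q. c v < 0")
    case True
    have "\<forall>v\<in>Q. norm v = 1" using sc S by (auto simp: Q_def sphere_config_def)
    then obtain j y where j: "j \<in> Q" "c j < 0"
      and y: "y \<in> convex hull {v\<in>Q. 0 < c v}" "y \<noteq> 0 \<longrightarrow> dist j y < 1"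
      using exists_vertex_near_hull_of_relation[OF fin _ c(2,3) True] by blast
    obtain i where i: "i \<in> S" "j = w i" using j by (auto simp: Q_def)
    have "{v\<in>Q. 0 < c v} \<subseteq> w ` ({1..n} - {i})" using i j S by (auto simp: Q_def)
    then have "y \<in> convex hull (w ` ({1..n} - {i}))" using y(1) hull_mono by blast
    then have "y = 0" using dist_ge_1_if_delta_cfg_ge_1[OF d1] i S y(2) by fastforce
    moreover have "convex hull {v\<in>Q. 0 < c v} \<subseteq> convex hull Q" by (rule hull_mono) auto
    ultimately show ?thesis using y(1) by (auto simp: Q_def)
  next
    case False
    then have nonneg: "\<forall>v\<in>Q. 0 \<le> c v" by auto
    with c(1) have "sum c Q > 0"
      using sum_nonneg_eq_0_iff[OF fin] c(3) by (metis order_less_le)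
    from normalized_weighted_sum_in_convex_hull[OF fin nonneg this, unfolded c(2)] show ?thesis
      by (simp add: Q_def)
  qed
qed

lemma inner_le_0_if_zero_in_hull_others:
  fixes w :: "nat \<Rightarrow> real^'d"
  assumes d1: "1 \<le> delta_cfg n w" and sc: "sphere_config n w"
    and ik: "i \<in> {1..n}" "k \<in> {1..n}" "k \<noteq> i"
    and z: "0 \<in> convex hull (w ` ({1..n} - {i}))"
  shows "inner (w i) (w k) \<le> 0"
proof (rule ccontr)
  define c where "c = inner (w i) (w k)"
  assume "\<not> ?thesis"
  then have "0 < c" by (simp add: c_def)
  have unit: "norm (w i) = 1" "norm (w k) = 1" using sc ik by (auto simp: sphere_config_def)
  then have "c \<le> 1" using norm_cauchy_schwarz[of "w i" "w k"] by (simp add: c_def)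
  have "w k \<in> convex hull (w ` ({1..n} - {i}))" using ik by (intro hull_inc) auto
  from convexD[OF convex_convex_hull z this, of "1 - c" c]
  have "c *\<^sub>R w k \<in> convex hull (w ` ({1..n} - {i}))" using \<open>0 < c\<close> \<open>c \<le> 1\<close> by simp
  then have "1 \<le> dist (w i) (c *\<^sub>R w k)"
    by (rule dist_ge_1_if_delta_cfg_ge_1[OF d1 ik(1)])
  moreover have "(dist (w i) (c *\<^sub>R w k))\<^sup>2 = 1 - c\<^sup>2"
  proof -
    have "(dist (w i) (c *\<^sub>R w k))\<^sup>2 = inner (w i - c *\<^sub>R w k) (w i - c *\<^sub>R w k)"
      by (simp add: dist_norm dot_square_norm)
    also have "\<dots> = inner (w i) (w i) - 2 * c * inner (w i) (w k) + c\<^sup>2 * inner (w k) (w k)"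
      by (simp add: inner_diff_left inner_diff_right inner_commute algebra_simps power2_eq_square)
    also have "\<dots> = 1 - c\<^sup>2"
      using unit by (simp add: dot_square_norm c_def power2_eq_square)
    finally show ?thesis .
  qed
  ultimately show False using \<open>0 < c\<close>
    by (smt (verit) one_le_power zero_less_power)
qed

section \<open>Orthogonal blocks and regular simplices\<close>

definition block_orthogonal :: "nat \<Rightarrow> (nat \<Rightarrow> 'a::real_inner) \<Rightarrow> nat set \<Rightarrow> bool" where
  "block_orthogonal n w G \<longleftrightarrow> (\<forall>j\<in>{1..n} - G. \<forall>k\<in>G. inner (w j) (w k) = 0)"

lemma block_orthogonal_Un:
  "block_orthogonal n w A \<Longrightarrow> block_orthogonal n w B \<Longrightarrow> block_orthogonal n w (A \<union> B)"
  by (auto simp: block_orthogonal_def)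

lemma dim_UN_orthogonal:
  fixes w :: "'i \<Rightarrow> 'a::euclidean_space"
  assumes "finite J"
    and "\<forall>j\<in>J. \<forall>j'\<in>J. j \<noteq> j' \<longrightarrow> (\<forall>x\<in>w ` S j. \<forall>y\<in>w ` S j'. orthogonal x y)"
  shows "dim (w ` (\<Union>j\<in>J. S j)) = (\<Sum>j\<in>J. dim (w ` S j))"
  using assms
proof (induction J rule: finite_induct)
  case (insert j J)
  have "dim (w ` S j \<union> w ` (\<Union>j\<in>J. S j)) = dim (w ` S j) + dim (w ` (\<Union>j\<in>J. S j))"
    using insert.hyps(2) insert.prems
    by (intro dim_orthogonal_sum) (fastforce simp: orthogonal_def)
  then show ?case using insert by (simp add: image_Un)
qed simp

lemma dim_Un_if_block_orthogonal:
  fixes w :: "nat \<Rightarrow> 'a::euclidean_space"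
  assumes "block_orthogonal n w A" "A \<subseteq> {1..n}" "C \<subseteq> {1..n} - A"
  shows "dim (w ` (A \<union> C)) = dim (w ` A) + dim (w ` C)"
proof -
  have "inner (w a) (w c) = 0" if "a \<in> A" "c \<in> C" for a c
  proof -
    have "inner (w c) (w a) = 0" using assms that by (auto simp: block_orthogonal_def)
    then show ?thesis by (simp add: inner_commute)
  qed
  then have "\<And>x y. x \<in> w ` A \<Longrightarrow> y \<in> w ` C \<Longrightarrow> inner x y = 0" by blast
  then show ?thesis by (simp add: image_Un dim_orthogonal_sum)
qed

lemma regular_simplex_lift:
  fixes u :: "'a::real_inner" and p :: "nat \<Rightarrow> 'a"
  assumes K: "1 \<le> K" and u: "norm u = 1"
    and p: "\<forall>i\<le>K. norm (p i) = 1 \<and> inner (p i) u = 0"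
      "\<forall>i\<le>K. \<forall>j\<le>K. i \<noteq> j \<longrightarrow> inner (p i) (p j) = -1 / real K"
  defines "t \<equiv> 1 / (real K + 1)"
  defines "q \<equiv> \<lambda>i. if i \<le> K then sqrt (1 - t\<^sup>2) *\<^sub>R p i - t *\<^sub>R u else u"
  shows "\<forall>i\<le>Suc K. norm (q i) = 1"
    and "\<forall>i\<le>Suc K. \<forall>j\<le>Suc K. i \<noteq> j \<longrightarrow> inner (q i) (q j) = -1 / real (Suc K)"
proof -
  define a where "a = sqrt (1 - t\<^sup>2)"
  have a: "a\<^sup>2 = 1 - t\<^sup>2"
    unfolding a_def by (rule real_sqrt_pow2) (simp add: t_def power_le_one)
  have uu: "inner u u = 1" and pp: "inner (p i) (p i) = 1" and pu: "inner (p i) u = 0"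
    if "i \<le> K" for i
    using u p(1) that by (auto simp: dot_square_norm)
  have "norm (q i) = 1" if "i \<le> Suc K" for i
  proof (cases "i \<le> K")
    case True
    then have "inner (q i) (q i) = a\<^sup>2 * inner (p i) (p i) - 2 * a * t * inner (p i) u + t\<^sup>2 * inner u u"
      by (simp add: q_def a_def inner_diff_left inner_diff_right inner_commute algebra_simps
          power2_eq_square)
    also have "\<dots> = 1" using a pp[OF True] pu[OF True] uu[OF True] by simp
    finally show ?thesis by (simp add: norm_eq_sqrt_inner)
  qed (use u in \<open>simp add: q_def\<close>)
  moreover have "inner (q i) (q j) = -1 / real (Suc K)"
    if ij: "i \<le> Suc K" "j \<le> Suc K" "i \<noteq> j" for i j
  proof -
    have "i \<le> K \<or> i = Suc K" "j \<le> K \<or> j = Suc K" using ij(1,2) by auto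
    then consider "i \<le> K" "j \<le> K" | "i \<le> K" "j = Suc K" | "i = Suc K" "j \<le> K"
      using ij(3) by blast
    then show ?thesis
    proof cases
      case 1
      then have "inner (q i) (q j) = a\<^sup>2 * inner (p i) (p j) - a * t * inner (p i) u
          - a * t * inner (p j) u + t\<^sup>2 * inner u u"
        by (simp add: q_def a_def inner_diff_left inner_diff_right inner_commute algebra_simps
            power2_eq_square)
      also have "\<dots> = (1 - t\<^sup>2) * (-1 / real K) + t\<^sup>2" using a p(2) 1 ij(3) pu uu by simp
      also have "\<dots> = -1 / (real K + 1)"
        using K by (simp add: t_def divide_simps power2_eq_square) (simp add: algebra_simps)
      finally show ?thesis by simp
    qed (use pu uu K in \<open>auto simp: q_def t_def inner_diff_left inner_diff_right inner_commute\<close>)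
  qed
  ultimately show "\<forall>i\<le>Suc K. norm (q i) = 1"
    and "\<forall>i\<le>Suc K. \<forall>j\<le>Suc K. i \<noteq> j \<longrightarrow> inner (q i) (q j) = -1 / real (Suc K)"
    by blast+
qed

lemma regular_simplex_in_subspace:
  fixes U :: "'a::euclidean_space set"
  assumes "1 \<le> K" "subspace U" "K \<le> dim U"
  shows "\<exists>p. (\<forall>i\<le>K. p i \<in> U \<and> norm (p i) = 1) \<and>
    (\<forall>i\<le>K. \<forall>j\<le>K. i \<noteq> j \<longrightarrow> inner (p i) (p j) = -1 / real K)"
  using assms
proof (induction K arbitrary: U rule: nat_induct_at_least)
  case base
  then have "dim U \<noteq> 0" by linarith
  then have "\<not> U \<subseteq> {0}" by simp
  then obtain x where "x \<in> U" "x \<noteq> 0" by auto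
  then have "sgn x \<in> U" "- sgn x \<in> U" "norm (sgn x) = 1"
    using base by (auto simp: sgn_div_norm subspace_scale subspace_neg norm_sgn)
  then show ?case
    by (intro exI[of _ "\<lambda>i. if i = 0 then - sgn x else sgn x"]) (auto simp: dot_square_norm)
next
  case (Suc K)
  then have "dim U \<noteq> 0" by linarith
  then have "\<not> U \<subseteq> {0}" by simp
  then obtain x where "x \<in> U" "x \<noteq> 0" by auto
  define u where "u = sgn x"
  have u: "u \<in> U" "norm u = 1"
    using Suc.prems(1) \<open>x \<in> U\<close> \<open>x \<noteq> 0\<close> by (simp_all add: u_def sgn_div_norm subspace_scale norm_sgn)
  define U' where "U' = {y \<in> U. \<forall>z\<in>span {u}. orthogonal z y}"
  have "U' = U \<inter> {y. \<forall>z\<in>span {u}. orthogonal z y}" by (auto simp: U'_def)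
  then have "subspace U'"
    using subspace_inter[OF Suc.prems(1) subspace_orthogonal_to_vectors] by simp
  moreover have "dim U' + dim (span {u}) = dim U"
    unfolding U'_def using u Suc.prems(1)
    by (intro dim_subspace_orthogonal_to_vectors subspace_span) (auto simp: span_minimal)
  then have "K \<le> dim U'" using Suc.prems(2) u by (cases "u = 0") auto
  ultimately obtain p where p: "\<forall>i\<le>K. p i \<in> U' \<and> norm (p i) = 1"
    "\<forall>i\<le>K. \<forall>j\<le>K. i \<noteq> j \<longrightarrow> inner (p i) (p j) = -1 / real K"
    using Suc.IH by blast
  then have "\<forall>i\<le>K. norm (p i) = 1 \<and> inner (p i) u = 0"
    by (auto simp: U'_def orthogonal_def inner_commute span_base)
  note lift = regular_simplex_lift[OF Suc.hyps u(2) this p(2)]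
  define q where "q i = (if i \<le> K then sqrt (1 - (1 / (real K + 1))\<^sup>2) *\<^sub>R p i
    - (1 / (real K + 1)) *\<^sub>R u else u)" for i
  have "q i \<in> U" if "i \<le> Suc K" for i
    using p(1) u Suc.prems(1) by (auto simp: q_def U'_def intro!: subspace_diff subspace_scale)
  then show ?case using lift by (intro exI[of _ q]) (simp add: q_def)
qed

lemma regular_simplex_on_set:
  fixes U :: "'a::euclidean_space set"
  assumes "subspace U" "finite G" "2 \<le> card G" "card G \<le> dim U + 1"
  shows "\<exists>p. (\<forall>i\<in>G. p i \<in> U \<and> norm (p i) = 1) \<and>
    (\<forall>i\<in>G. \<forall>j\<in>G. i \<noteq> j \<longrightarrow> inner (p i) (p j) = -1 / (real (card G) - 1))"
proof -
  have "1 \<le> card G - 1" "card G - 1 \<le> dim U" using assms by auto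
  then obtain p where p: "\<forall>i\<le>card G - 1. p i \<in> U \<and> norm (p i) = 1"
    "\<forall>i\<le>card G - 1. \<forall>j\<le>card G - 1. i \<noteq> j \<longrightarrow> inner (p i) (p j) = -1 / real (card G - 1)"
    using regular_simplex_in_subspace[OF _ assms(1)] by blast
  obtain \<sigma> where \<sigma>: "bij_betw \<sigma> G {0..<card G}" using ex_bij_betw_finite_nat[OF assms(2)] by blast
  then have "\<sigma> i \<le> card G - 1" if "i \<in> G" for i
    using bij_betwE[OF \<sigma>] that by fastforce
  moreover have "\<sigma> i \<noteq> \<sigma> j" if "i \<in> G" "j \<in> G" "i \<noteq> j" for i j
    using \<sigma> that by (auto simp: bij_betw_def dest: inj_onD)
  ultimately show ?thesis
    using p assms(3) by (intro exI[of _ "p \<circ> \<sigma>"]) (simp add: of_nat_diff)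
qed

lemma exists_simplex_replacement:
  fixes w :: "nat \<Rightarrow> 'a::euclidean_space"
  assumes G: "G \<subseteq> {1..n}" "2 \<le> card G"
    and room: "card G \<le> DIM('a) - dim (w ` ({1..n} - G)) + 1"
  shows "\<exists>v. (\<forall>j\<in>{1..n} - G. v j = w j) \<and> block_orthogonal n v G \<and> (\<forall>k\<in>G. norm (v k) = 1) \<and>
    (\<forall>i\<in>G. \<forall>k\<in>G. i \<noteq> k \<longrightarrow> inner (v i) (v k) = -1 / (real (card G) - 1))"
proof -
  define T where "T = w ` ({1..n} - G)"
  define U where "U = {y. \<forall>x\<in>span T. orthogonal x y}"
  have "dim {y \<in> UNIV. \<forall>x\<in>span T. orthogonal x y} + dim (span T) = dim (UNIV :: 'a set)"
    by (rule dim_subspace_orthogonal_to_vectors) auto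
  then have "card G \<le> dim U + 1" using room by (simp add: U_def T_def)
  moreover have "finite G" using G finite_subset by blast
  ultimately obtain p where p: "\<forall>i\<in>G. p i \<in> U \<and> norm (p i) = 1"
    "\<forall>i\<in>G. \<forall>j\<in>G. i \<noteq> j \<longrightarrow> inner (p i) (p j) = -1 / (real (card G) - 1)"
    using regular_simplex_on_set[OF subspace_orthogonal_to_vectors] G(2) unfolding U_def by blast
  define v where "v k = (if k \<in> G then p k else w k)" for k
  have "block_orthogonal n v G"
    using p(1) by (auto simp: block_orthogonal_def v_def U_def T_def orthogonal_def span_base)
  then show ?thesis using p by (intro exI[of _ v]) (auto simp: v_def)
qed

section \<open>Cross-entropy of block configurations\<close>

lemma exp_mult_le_convex_comb:
  fixes t s :: real
  assumes "0 \<le> t" "t \<le> 1"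
  shows "exp (t * s) \<le> (1 - t) + t * exp s"
  using convex_onD[OF exp_convex, of t 0 s] assms by simp

lemma exp_mult_less_convex_comb:
  fixes t s :: real
  assumes "0 < t" "t < 1" "s \<noteq> 0"
  shows "exp (t * s) < (1 - t) + t * exp s"
proof -
  have "(1 - t) * (1 - t * s) \<le> (1 - t) * exp (- (t * s))"
    using assms exp_ge_add_one_self[of "- (t * s)"] by (intro mult_left_mono) auto
  moreover have "t * (1 + (1 - t) * s) < t * exp ((1 - t) * s)"
    using assms exp_minus_greater[of "- ((1 - t) * s)"] by (intro mult_strict_left_mono) auto
  ultimately have "exp (t * s) * 1 < exp (t * s) * ((1 - t) * exp (- (t * s)) + t * exp ((1 - t) * s))"
    by (intro mult_strict_left_mono) (auto simp: algebra_simps)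
  also have "\<dots> = (1 - t) + t * exp s"
    by (simp add: algebra_simps flip: exp_add)
  finally show ?thesis by simp
qed

lemma exp_ge_tangent: "exp a * (1 + b - a) \<le> exp (b :: real)"
proof -
  have "exp a * (1 + (b - a)) \<le> exp a * exp (b - a)"
    by (intro mult_left_mono) auto
  then show ?thesis by (simp add: algebra_simps flip: exp_add)
qed

lemma ln_add_exp_ge_tangent:
  fixes R c s :: real
  assumes "R > 0" "c \<ge> 0"
  shows "ln (R + c * exp s) \<ge> ln (R + c) + c / (R + c) * s"
proof -
  define t where "t = c / (R + c)"
  have pos: "R + c > 0" using assms by linarith
  have t: "0 \<le> t" "t \<le> 1" "(R + c) * t = c" using assms pos by (auto simp: t_def field_simps)
  have "(R + c) * exp (t * s) \<le> (R + c) * ((1 - t) + t * exp s)"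
    using exp_mult_le_convex_comb[OF t(1,2)] pos by (intro mult_left_mono) auto
  also have "\<dots> = (R + c) - (R + c) * t + ((R + c) * t) * exp s"
    by (simp add: algebra_simps)
  also have "\<dots> = R + c * exp s"
    using t(3) by simp
  finally have "ln ((R + c) * exp (t * s)) \<le> ln (R + c * exp s)"
    using pos by (intro ln_mono) auto
  then show ?thesis using pos by (simp add: ln_mult t_def)
qed

lemma card_mult_exp_mean_le_sum_exp:
  fixes f :: "'i \<Rightarrow> real"
  assumes "finite A" "A \<noteq> {}"
  shows "real (card A) * exp (sum f A / card A) \<le> (\<Sum>i\<in>A. exp (f i))"
proof -
  define m where "m = sum f A / card A"
  have card: "real (card A) > 0" using assms by (simp add: card_gt_0_iff)
  have "(\<Sum>i\<in>A. exp m * (1 + f i - m)) = exp m * (card A + sum f A - card A * m)"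
    by (simp add: sum_distrib_left[symmetric] sum.distrib sum_subtractf)
  also have "\<dots> = card A * exp m"
    using card by (simp add: m_def)
  finally show ?thesis
    unfolding m_def[symmetric] by (metis exp_ge_tangent sum_mono)
qed

lemma sum_inner_off_diagonal_ge:
  fixes x :: "'i \<Rightarrow> 'a::real_inner"
  assumes fin: "finite G" and unit: "\<forall>k\<in>G. norm (x k) = 1"
  shows "- real (card G) \<le> (\<Sum>k\<in>G. \<Sum>i\<in>G-{k}. inner (x i) (x k))"
proof -
  have "0 \<le> inner (\<Sum>i\<in>G. x i) (\<Sum>k\<in>G. x k)" by simp
  also have "\<dots> = (\<Sum>k\<in>G. inner (x k) (x k) + (\<Sum>i\<in>G-{k}. inner (x i) (x k)))"
    unfolding inner_sum_right inner_sum_left using fin by (intro sum.cong refl) (simp add: sum.remove)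
  also have "\<dots> = real (card G) + (\<Sum>k\<in>G. \<Sum>i\<in>G-{k}. inner (x i) (x k))"
    using unit by (simp add: sum.distrib dot_square_norm)
  finally show ?thesis by linarith
qed

text \<open>Jensen's inequality bounds each inner sum below by \<open>K exp (r\<^sub>k / \<tau>)\<close>, with \<open>r\<^sub>k\<close> the mean
  inner product and \<open>K = card G - 1\<close>; the convex function \<open>s \<mapsto> ln (R + K e\<^sup>s)\<close> is then
  linearised at the regular-simplex value \<open>r\<^sub>k = -1/K\<close>, and the linear terms have nonnegative
  sum because \<open>|\<Sum> x\<^sub>k|\<^sup>2 \<ge> 0\<close>.\<close>
lemma sum_ln_partition_block_ge:
  fixes x :: "'i \<Rightarrow> 'a::real_inner"
  assumes fin: "finite G" and ne: "G \<noteq> {}" and R: "R > 0" and tau: "\<tau> > 0"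
    and unit: "\<forall>k\<in>G. norm (x k) = 1"
  shows "real (card G) * ln (R + (real (card G) - 1) * exp (-1 / ((real (card G) - 1) * \<tau>)))
    \<le> (\<Sum>k\<in>G. ln (R + (\<Sum>i\<in>G-{k}. exp (inner (x i) (x k) / \<tau>))))"
proof (cases "card G = 1")
  case True
  then obtain k where "G = {k}" by (auto simp: card_1_singleton_iff)
  then show ?thesis by simp
next
  case False
  define K where "K = real (card G) - 1"
  have "card G \<noteq> 0" using ne fin by simp
  with False have two: "card G \<ge> 2" by linarith
  then have K: "K > 0" by (simp add: K_def)
  have card_rest: "real (card (G - {k})) = K" if "k \<in> G" for k
    using that fin two by (simp add: K_def card_Diff_singleton of_nat_diff)
  define r where "r k = (\<Sum>i\<in>G-{k}. inner (x i) (x k)) / K" for k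
  define q where "q = exp (-1 / (K * \<tau>))"
  define \<theta> where "\<theta> = K * q / (R + K * q)"
  have q: "q > 0" by (simp add: q_def)
  have lin: "ln (R + K * q) + \<theta> * ((r k + 1 / K) / \<tau>)
      \<le> ln (R + (\<Sum>i\<in>G-{k}. exp (inner (x i) (x k) / \<tau>)))" if k: "k \<in> G" for k
  proof -
    have ne_rest: "G - {k} \<noteq> {}" using card_rest[OF k] K by force
    have "K * exp (r k / \<tau>) \<le> (\<Sum>i\<in>G-{k}. exp (inner (x i) (x k) / \<tau>))"
      using card_mult_exp_mean_le_sum_exp[OF _ ne_rest, of "\<lambda>i. inner (x i) (x k) / \<tau>"] fin
      by (simp add: card_rest[OF k] r_def sum_divide_distrib[symmetric] mult.commute)
    moreover have "exp (r k / \<tau>) = q * exp ((r k + 1 / K) / \<tau>)"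
      using K tau by (simp add: q_def field_simps flip: exp_add)
    ultimately have "ln (R + K * q * exp ((r k + 1 / K) / \<tau>))
        \<le> ln (R + (\<Sum>i\<in>G-{k}. exp (inner (x i) (x k) / \<tau>)))"
      using R K q by (intro ln_mono) (auto simp: mult.assoc add_pos_pos)
    with ln_add_exp_ge_tangent[OF R, of "K * q"] K q show ?thesis
      by (smt (verit) \<theta>_def mult_nonneg_nonneg)
  qed
  have "- real (card G) \<le> K * (\<Sum>k\<in>G. r k)"
    using sum_inner_off_diagonal_ge[OF fin unit] K by (simp add: r_def sum_divide_distrib[symmetric])
  then have "0 \<le> (\<Sum>k\<in>G. (r k + 1 / K) / \<tau>)"
    using K tau by (simp add: sum.distrib sum_divide_distrib[symmetric] field_simps sum_distrib_left)
  moreover have "\<theta> \<ge> 0" using K q R by (simp add: \<theta>_def)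
  ultimately have "0 \<le> (\<Sum>k\<in>G. \<theta> * ((r k + 1 / K) / \<tau>))"
    by (metis sum_distrib_left mult_nonneg_nonneg)
  then have "real (card G) * ln (R + K * q)
      \<le> (\<Sum>k\<in>G. ln (R + K * q) + \<theta> * ((r k + 1 / K) / \<tau>))"
    by (simp add: sum.distrib)
  also have "\<dots> \<le> (\<Sum>k\<in>G. ln (R + (\<Sum>i\<in>G-{k}. exp (inner (x i) (x k) / \<tau>))))"
    by (intro sum_mono lin)
  finally show ?thesis by (simp add: K_def q_def)
qed

definition log_partition :: "real \<Rightarrow> nat \<Rightarrow> (nat \<Rightarrow> 'a::real_inner) \<Rightarrow> nat \<Rightarrow> real" where
  "log_partition \<tau> n w k = ln (\<Sum>j\<in>{1..n}. exp (inner (w j) (w k) / \<tau>))"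

text \<open>The partition sum at a vertex of a regular simplex of \<open>M\<close> unit vectors that is orthogonal
  to the other \<open>n - M\<close> points (for \<open>M = 1\<close> the last summand vanishes).\<close>
definition simplex_partition :: "real \<Rightarrow> nat \<Rightarrow> nat \<Rightarrow> real" where
  "simplex_partition \<tau> n M =
     (real n - real M) + exp (1 / \<tau>) + (real M - 1) * exp (-1 / ((real M - 1) * \<tau>))"

lemma CE_loss_eq_log_partition:
  fixes w :: "nat \<Rightarrow> real^'d"
  assumes "sphere_config n w"
  shows "CE_loss \<tau> n w = ((\<Sum>k\<in>{1..n}. log_partition \<tau> n w k) - real n / \<tau>) / real n"
proof -
  have "- ln (exp (inner (w k) (w k) / \<tau>) / (\<Sum>j\<in>{1..n}. exp (inner (w j) (w k) / \<tau>)))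
      = log_partition \<tau> n w k - 1 / \<tau>" if k: "k \<in> {1..n}" for k
  proof -
    have "inner (w k) (w k) = 1" using assms k by (simp add: sphere_config_def dot_square_norm)
    moreover have "(\<Sum>j\<in>{1..n}. exp (inner (w j) (w k) / \<tau>)) > 0"
      using k by (intro sum_pos) auto
    ultimately show ?thesis by (simp add: log_partition_def ln_div)
  qed
  then show ?thesis
    unfolding CE_loss_def by (simp add: sum_subtractf)
qed

lemma log_partition_block:
  fixes w :: "nat \<Rightarrow> 'a::real_inner"
  assumes G: "G \<subseteq> {1..n}" and orth: "block_orthogonal n w G"
    and k: "k \<in> G" and unit: "norm (w k) = 1"
  shows "log_partition \<tau> n w k
    = ln ((real n - real (card G)) + exp (1 / \<tau>) + (\<Sum>i\<in>G-{k}. exp (inner (w i) (w k) / \<tau>)))"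
proof -
  have fin: "finite G" using G finite_subset by blast
  have "card G \<le> n" using card_mono[OF _ G] by simp
  have "(\<Sum>j\<in>{1..n}. exp (inner (w j) (w k) / \<tau>))
      = (\<Sum>j\<in>{1..n} - G. exp (inner (w j) (w k) / \<tau>)) + (\<Sum>j\<in>G. exp (inner (w j) (w k) / \<tau>))"
    using G by (simp add: sum.subset_diff)
  also have "(\<Sum>j\<in>{1..n} - G. exp (inner (w j) (w k) / \<tau>)) = real n - real (card G)"
    using orth k G fin \<open>card G \<le> n\<close> by (simp add: block_orthogonal_def card_Diff_subset of_nat_diff)
  also have "(\<Sum>j\<in>G. exp (inner (w j) (w k) / \<tau>))
      = exp (1 / \<tau>) + (\<Sum>i\<in>G-{k}. exp (inner (w i) (w k) / \<tau>))"
    using fin k unit by (simp add: sum.remove dot_square_norm)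
  finally show ?thesis by (simp add: log_partition_def add.assoc)
qed

lemma sum_log_partition_block_ge:
  fixes w :: "nat \<Rightarrow> 'a::real_inner"
  assumes G: "G \<subseteq> {1..n}" "G \<noteq> {}" and orth: "block_orthogonal n w G"
    and unit: "\<forall>k\<in>G. norm (w k) = 1" and tau: "\<tau> > 0"
  shows "real (card G) * ln (simplex_partition \<tau> n (card G)) \<le> (\<Sum>k\<in>G. log_partition \<tau> n w k)"
proof -
  have "card G \<le> n" using card_mono[OF _ G(1)] by simp
  then have R: "real n - real (card G) + exp (1 / \<tau>) > 0" by (simp add: add_nonneg_pos)
  show ?thesis
    using sum_ln_partition_block_ge[OF _ G(2) R tau unit] finite_subset[OF G(1)]
      log_partition_block[OF G(1) orth] unit
    by (simp add: simplex_partition_def add.assoc)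
qed

lemma log_partition_simplex_block:
  fixes v :: "nat \<Rightarrow> 'a::real_inner"
  assumes G: "G \<subseteq> {1..n}" and orth: "block_orthogonal n v G"
    and unit: "\<forall>k\<in>G. norm (v k) = 1"
    and simplex: "\<forall>i\<in>G. \<forall>k\<in>G. i \<noteq> k \<longrightarrow> inner (v i) (v k) = -1 / (real (card G) - 1)"
    and k: "k \<in> G"
  shows "log_partition \<tau> n v k = ln (simplex_partition \<tau> n (card G))"
proof -
  have fin: "finite G" using G finite_subset by blast
  have "card G \<ge> 1" using fin k by (auto simp: Suc_le_eq card_gt_0_iff)
  have "(\<Sum>i\<in>G-{k}. exp (inner (v i) (v k) / \<tau>)) = (\<Sum>i\<in>G-{k}. exp (-1 / ((real (card G) - 1) * \<tau>)))"
    using simplex k by (intro sum.cong refl) auto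
  also have "\<dots> = (real (card G) - 1) * exp (-1 / ((real (card G) - 1) * \<tau>))"
    using fin k \<open>card G \<ge> 1\<close> by (simp add: card_Diff_singleton of_nat_diff)
  finally show ?thesis
    using log_partition_block[OF G orth k] unit k by (simp add: simplex_partition_def add.assoc)
qed

lemma simplex_partition_pos:
  assumes "1 \<le> M" "M \<le> n" shows "simplex_partition \<tau> n M > 0"
proof -
  have "(real M - 1) * exp (-1 / ((real M - 1) * \<tau>)) \<ge> 0" using assms(1) by simp
  then show ?thesis using assms(2) by (simp add: simplex_partition_def add_nonneg_pos add_pos_nonneg)
qed

lemma simplex_partition_strict_decreasing:
  assumes a: "1 \<le> a" "a < M" and tau: "\<tau> > 0"
  shows "simplex_partition \<tau> n M < simplex_partition \<tau> n a"
proof -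
  define A B where "A = real a - 1" and "B = real M - 1"
  have AB: "0 \<le> A" "A < B" using a by (auto simp: A_def B_def)
  have "B * exp (-1 / (B * \<tau>)) < (B - A) + A * exp (-1 / (A * \<tau>))"
  proof (cases "A = 0")
    case True
    then show ?thesis using AB tau by simp
  next
    case False
    define t z where "t = A / B" and "z = -1 / (A * \<tau>)"
    have t: "0 < t" "t < 1" and z: "z \<noteq> 0" using AB False tau by (auto simp: t_def z_def)
    have "B * exp (t * z) < B * ((1 - t) + t * exp z)"
      using exp_mult_less_convex_comb[OF t z] AB by (intro mult_strict_left_mono) auto
    moreover have "t * z = -1 / (B * \<tau>)" "B * ((1 - t) + t * exp z) = (B - A) + A * exp z"
      using AB False tau by (auto simp: t_def z_def field_simps)
    ultimately show ?thesis by (simp add: z_def)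
  qed
  then show ?thesis by (simp add: simplex_partition_def A_def B_def)
qed

lemma log_partition_eq_off_block:
  fixes v w :: "nat \<Rightarrow> 'a::real_inner"
  assumes "block_orthogonal n v G" "block_orthogonal n w G"
    and "\<forall>j\<in>{1..n} - G. v j = w j" and "k \<in> {1..n} - G"
  shows "log_partition \<tau> n v k = log_partition \<tau> n w k"
proof -
  have "inner (v j) (v k) = inner (w j) (w k)" if "j \<in> {1..n}" for j
  proof (cases "j \<in> G")
    case True
    then have "inner (v k) (v j) = 0" "inner (w k) (w j) = 0"
      using assms(1,2,4) by (auto simp: block_orthogonal_def)
    then show ?thesis by (metis inner_commute)
  qed (use assms(3,4) that in auto)
  then show ?thesis by (simp add: log_partition_def)
qed

text \<open>Each block contributes at least as much as a regular simplex of its own size, and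
  \<open>simplex_partition\<close> is strictly decreasing in the size.\<close>
lemma sum_log_partition_merge_less:
  fixes v w :: "nat \<Rightarrow> 'a::real_inner"
  assumes AB: "A \<union> B \<subseteq> {1..n}" "A \<inter> B = {}" "A \<noteq> {}" "B \<noteq> {}" and tau: "\<tau> > 0"
    and orth_w: "block_orthogonal n w A" "block_orthogonal n w B"
    and unit_w: "\<forall>k\<in>A \<union> B. norm (w k) = 1"
    and orth_v: "block_orthogonal n v (A \<union> B)" and off: "\<forall>j\<in>{1..n} - (A \<union> B). v j = w j"
    and unit_v: "\<forall>k\<in>A \<union> B. norm (v k) = 1"
    and simplex: "\<forall>i\<in>A \<union> B. \<forall>k\<in>A \<union> B. i \<noteq> k \<longrightarrow> inner (v i) (v k) = -1 / (real (card (A \<union> B)) - 1)"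
  shows "(\<Sum>k\<in>{1..n}. log_partition \<tau> n v k) < (\<Sum>k\<in>{1..n}. log_partition \<tau> n w k)"
proof -
  define G M where "G = A \<union> B" and "M = card (A \<union> B)"
  have fin: "finite A" "finite B" using AB finite_subset by blast+
  have M: "M = card A + card B" "M \<le> n"
    using fin AB card_mono[OF _ AB(1)] by (auto simp: M_def card_Un_disjoint)
  have card: "1 \<le> card A" "card A < M" "1 \<le> card B" "card B < M"
    using fin AB M by (auto simp: Suc_le_eq card_gt_0_iff)
  have lnZ: "ln (simplex_partition \<tau> n M) < ln (simplex_partition \<tau> n (card A))"
            "ln (simplex_partition \<tau> n M) < ln (simplex_partition \<tau> n (card B))"
    using card M simplex_partition_strict_decreasing[OF _ _ tau] simplex_partition_pos by auto
  have "(\<Sum>k\<in>G. log_partition \<tau> n v k) = real (card A) * ln (simplex_partition \<tau> n M)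
      + real (card B) * ln (simplex_partition \<tau> n M)"
    using log_partition_simplex_block[OF AB(1) orth_v unit_v simplex] M(1)
    by (simp add: G_def M_def algebra_simps)
  also have "\<dots> < real (card A) * ln (simplex_partition \<tau> n (card A))
      + real (card B) * ln (simplex_partition \<tau> n (card B))"
    using lnZ card by (intro add_strict_mono mult_strict_left_mono) auto
  also have "\<dots> \<le> (\<Sum>k\<in>A. log_partition \<tau> n w k) + (\<Sum>k\<in>B. log_partition \<tau> n w k)"
    using AB orth_w unit_w tau by (intro add_mono sum_log_partition_block_ge) auto
  also have "\<dots> = (\<Sum>k\<in>G. log_partition \<tau> n w k)"
    using fin AB by (simp add: G_def sum.union_disjoint)
  finally have "(\<Sum>k\<in>G. log_partition \<tau> n v k) < (\<Sum>k\<in>G. log_partition \<tau> n w k)" .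
  moreover have "(\<Sum>k\<in>{1..n} - G. log_partition \<tau> n v k) = (\<Sum>k\<in>{1..n} - G. log_partition \<tau> n w k)"
    using orth_v block_orthogonal_Un[OF orth_w] off
    by (intro sum.cong refl log_partition_eq_off_block) (auto simp: G_def)
  moreover have "(\<Sum>k\<in>{1..n}. f k) = (\<Sum>k\<in>{1..n} - G. f k) + (\<Sum>k\<in>G. f k)"
    for f :: "nat \<Rightarrow> real"
    using AB(1) by (simp add: G_def sum.subset_diff)
  ultimately show ?thesis by simp
qed

section \<open>Softmax codes with an orthogonal block partition\<close>

lemma nonacute_config_if_zero_in_disjoint_hulls:
  fixes w :: "nat \<Rightarrow> real^'d"
  assumes d1: "1 \<le> delta_cfg n w" and sc: "sphere_config n w"
    and AB: "A \<subseteq> {1..n}" "B \<subseteq> {1..n}" "A \<inter> B = {}"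
    and zero: "0 \<in> convex hull (w ` A)" "0 \<in> convex hull (w ` B)"
  shows "nonacute_config n w"
  unfolding nonacute_config_def
proof (intro ballI impI)
  fix i k assume ik: "i \<in> {1..n}" "k \<in> {1..n}" "i \<noteq> k"
  have "0 \<in> convex hull (w ` ({1..n} - {i}))" if "C \<subseteq> {1..n}" "i \<notin> C" "0 \<in> convex hull (w ` C)" for C
  proof -
    have "w ` C \<subseteq> w ` ({1..n} - {i})" using that(1,2) by blast
    then show ?thesis using hull_mono that(3) by blast
  qed
  moreover have "i \<notin> A \<or> i \<notin> B" using AB(3) by blast
  ultimately have "0 \<in> convex hull (w ` ({1..n} - {i}))" using AB(1,2) zero by blast
  then show "inner (w i) (w k) \<le> 0"
    using inner_le_0_if_zero_in_hull_others[OF d1 sc ik(1,2)] ik(3) by simp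
qed

lemma block_orthogonal_if_orthogonal_spans:
  fixes w :: "nat \<Rightarrow> 'a::real_inner"
  assumes cover: "(\<Union>j\<in>J. S j) = {1..n}" and j: "j \<in> J"
    and orth: "\<forall>j'\<in>J. j' \<noteq> j \<longrightarrow> (\<forall>x\<in>span (w ` S j'). \<forall>y\<in>span (w ` S j). orthogonal x y)"
  shows "block_orthogonal n w (S j)"
  unfolding block_orthogonal_def
proof (intro ballI)
  fix i k assume ik: "i \<in> {1..n} - S j" "k \<in> S j"
  then obtain j' where j': "j' \<in> J" "i \<in> S j'" using cover by blast
  then have "j' \<noteq> j" using ik by blast
  moreover have "w i \<in> span (w ` S j')" "w k \<in> span (w ` S j)"
    using ik j' by (auto intro: span_base)
  ultimately have "orthogonal (w i) (w k)" using orth j' by blast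
  then show "inner (w i) (w k) = 0" by (simp add: orthogonal_def)
qed

lemma dim_eq_sum_dim_blocks:
  fixes w :: "nat \<Rightarrow> 'a::euclidean_space" and l :: nat
  assumes cover: "(\<Union>j\<in>{0..l}. S j) = {1..n}"
    and orth: "\<forall>j\<in>{0..l}. \<forall>j'\<in>{0..l}. j \<noteq> j' \<longrightarrow>
              (\<forall>x\<in>span (w ` S j). \<forall>y\<in>span (w ` S j'). orthogonal x y)"
  shows "dim (w ` {1..n}) = (\<Sum>j\<in>{0..l}. dim (w ` S j))"
proof -
  have "\<forall>j\<in>{0..l}. \<forall>j'\<in>{0..l}. j \<noteq> j' \<longrightarrow> (\<forall>x\<in>w ` S j. \<forall>y\<in>w ` S j'. orthogonal x y)"
    using orth by (meson span_base)
  then have "dim (w ` (\<Union>j\<in>{0..l}. S j)) = (\<Sum>j\<in>{0..l}. dim (w ` S j))"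
    by (rule dim_UN_orthogonal[OF finite_atLeastAtMost])
  then show ?thesis using cover by simp
qed

lemma card_eq_dim_add_blocks:
  fixes w :: "nat \<Rightarrow> 'a::euclidean_space" and l :: nat
  assumes cover: "(\<Union>j\<in>{0..l}. S j) = {1..n}"
    and disj: "\<forall>j\<in>{0..l}. \<forall>j'\<in>{0..l}. j \<noteq> j' \<longrightarrow> S j \<inter> S j' = {}"
    and orth: "\<forall>j\<in>{0..l}. \<forall>j'\<in>{0..l}. j \<noteq> j' \<longrightarrow>
              (\<forall>x\<in>span (w ` S j). \<forall>y\<in>span (w ` S j'). orthogonal x y)"
    and a: "card (S 0) = dim (span (w ` S 0))"
    and b: "\<forall>j\<in>{1..l}. card (S j) = dim (span (w ` S j)) + 1"
  shows "n = dim (w ` {1..n}) + l"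
proof -
  have "finite (S j)" if "j \<in> {0..l}" for j
    using cover that finite_subset[of "S j" "{1..n}"] by blast
  then have "n = (\<Sum>j\<in>{0..l}. card (S j))"
    using card_UN_disjoint[of "{0..l}" S] disj cover by simp
  also have "\<dots> = card (S 0) + (\<Sum>j\<in>{1..l}. dim (w ` S j) + 1)"
    using b by (simp add: sum.atLeast_Suc_atMost)
  also have "\<dots> = card (S 0) + (\<Sum>j\<in>{1..l}. dim (w ` S j)) + l"
    by (subst sum.distrib) simp
  also have "\<dots> = (\<Sum>j\<in>{0..l}. dim (w ` S j)) + l"
    using a by (simp add: sum.atLeast_Suc_atMost)
  finally show ?thesis using dim_eq_sum_dim_blocks[OF cover orth] by simp
qed

lemma nonacute_config_replace_block:
  assumes nonacute: "nonacute_config n w" and off: "\<forall>j\<in>{1..n} - G. v j = w j"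
    and orth: "block_orthogonal n v G"
    and inside: "\<forall>i\<in>G. \<forall>k\<in>G. i \<noteq> k \<longrightarrow> inner (v i) (v k) \<le> 0"
  shows "nonacute_config n v"
  unfolding nonacute_config_def
proof (intro ballI impI)
  fix i k assume ik: "i \<in> {1..n}" "k \<in> {1..n}" "i \<noteq> k"
  consider "i \<in> G" "k \<in> G" | "i \<notin> G" "k \<in> G" | "i \<in> G" "k \<notin> G" | "i \<notin> G" "k \<notin> G"
    by blast
  then show "inner (v i) (v k) \<le> 0"
  proof cases
    case 3
    then have "inner (v k) (v i) = 0" using orth ik by (simp add: block_orthogonal_def)
    then show ?thesis by (simp add: inner_commute)
  qed (use inside nonacute off orth ik in \<open>auto simp: nonacute_config_def block_orthogonal_def\<close>)
qed

text \<open>The witness replaces \<open>A \<union> B\<close> by a regular simplex in the orthogonal complement of the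
  other points; the hypothesis on \<open>card A + card B\<close> says that this complement is large enough.\<close>
lemma exists_nonacute_config_with_smaller_CE_loss:
  fixes w :: "nat \<Rightarrow> real^'d"
  assumes sc: "sphere_config n w" and nonacute: "nonacute_config n w" and tau: "\<tau> > 0"
    and AB: "A \<union> B \<subseteq> {1..n}" "A \<inter> B = {}" "A \<noteq> {}" "B \<noteq> {}"
    and orth: "block_orthogonal n w A" "block_orthogonal n w B"
    and room: "card A + card B \<le> CARD('d) - dim (w ` {1..n}) + dim (w ` A) + dim (w ` B) + 1"
  shows "\<exists>v :: nat \<Rightarrow> real^'d. sphere_config n v \<and> nonacute_config n v \<and> CE_loss \<tau> n v < CE_loss \<tau> n w"
proof -
  define G R where "G = A \<union> B" and "R = {1..n} - (A \<union> B)"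
  have fin: "finite A" "finite B" using AB finite_subset by blast+
  moreover have "card A \<ge> 1" "card B \<ge> 1" using fin AB by (auto simp: Suc_le_eq card_gt_0_iff)
  ultimately have card: "card G = card A + card B" "2 \<le> card G"
    using AB by (auto simp: G_def card_Un_disjoint)
  have "dim (w ` (A \<union> (B \<union> R))) = dim (w ` A) + dim (w ` (B \<union> R))"
    using orth(1) AB by (intro dim_Un_if_block_orthogonal) (auto simp: R_def)
  moreover have "dim (w ` (B \<union> R)) = dim (w ` B) + dim (w ` R)"
    using orth(2) AB by (intro dim_Un_if_block_orthogonal) (auto simp: R_def)
  moreover have "A \<union> (B \<union> R) = {1..n}" using AB by (auto simp: R_def)
  ultimately have "dim (w ` {1..n}) = dim (w ` A) + dim (w ` B) + dim (w ` R)" by simp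
  moreover have "dim (w ` {1..n}) \<le> CARD('d)" using dim_subset_UNIV[of "w ` {1..n}"] by simp
  ultimately have "card G \<le> DIM(real^'d) - dim (w ` ({1..n} - G)) + 1"
    using room card(1) by (simp add: G_def R_def)
  moreover have "G \<subseteq> {1..n}" using AB by (simp add: G_def)
  ultimately obtain v where v: "\<forall>j\<in>{1..n} - G. v j = w j" "block_orthogonal n v G" "\<forall>k\<in>G. norm (v k) = 1"
      "\<forall>i\<in>G. \<forall>k\<in>G. i \<noteq> k \<longrightarrow> inner (v i) (v k) = -1 / (real (card G) - 1)"
    using exists_simplex_replacement[of G n w] card(2) by blast
  have sc_v: "sphere_config n v"
    using sc v(1,3) by (auto simp: sphere_config_def)
  have "nonacute_config n v"
    using v(1,2,4) card(2) by (intro nonacute_config_replace_block[OF nonacute]) auto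
  moreover have "(\<Sum>k\<in>{1..n}. log_partition \<tau> n v k) < (\<Sum>k\<in>{1..n}. log_partition \<tau> n w k)"
    using sc AB v unfolding G_def
    by (intro sum_log_partition_merge_less[OF AB tau orth]) (auto simp: sphere_config_def)
  moreover have "n > 0" using AB by auto
  ultimately have "CE_loss \<tau> n v < CE_loss \<tau> n w"
    unfolding CE_loss_eq_log_partition[OF sc_v] CE_loss_eq_log_partition[OF sc]
    by (intro divide_strict_right_mono diff_strict_right_mono) simp_all
  with sc_v \<open>nonacute_config n v\<close> show ?thesis by blast
qed

lemma orthogonal_partition_saturated_if_CE_minimal:
  fixes w :: "nat \<Rightarrow> real^'d" and l :: nat
  assumes sc: "sphere_config n w" and nonacute: "nonacute_config n w" and tau: "\<tau> > 0"
    and minim: "\<forall>v :: nat \<Rightarrow> real^'d. sphere_config n v \<and> nonacute_config n v \<longrightarrow>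
      CE_loss \<tau> n w \<le> CE_loss \<tau> n v"
    and cover: "(\<Union>j\<in>{0..l}. S j) = {1..n}"
    and disj: "\<forall>j\<in>{0..l}. \<forall>j'\<in>{0..l}. j \<noteq> j' \<longrightarrow> S j \<inter> S j' = {}"
    and l2: "2 \<le> l"
    and a: "card (S 0) = dim (span (w ` S 0))"
    and b: "\<forall>j\<in>{1..l}. card (S j) = dim (span (w ` S j)) + 1"
    and c: "\<forall>j\<in>{0..l}. \<forall>j'\<in>{0..l}. j \<noteq> j' \<longrightarrow>
              (\<forall>x\<in>span (w ` S j). \<forall>y\<in>span (w ` S j'). orthogonal x y)"
  shows "S 0 = {} \<and> dim (w ` {1..n}) = CARD('d)"
proof (rule ccontr)
  assume not_full: "\<not> ?thesis"
  have card_S: "card (S j) = dim (w ` S j) + 1" if "j \<in> {1..l}" for j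
    using b that by simp
  then have nonempty: "S j \<noteq> {}" if "j \<in> {1..l}" for j
    using that by fastforce
  have card_S0: "card (S 0) = dim (w ` S 0)" using a by simp
  have D: "dim (w ` {1..n}) \<le> CARD('d)" using dim_subset_UNIV[of "w ` {1..n}"] by simp
  \<comment> \<open>merge \<open>S 0\<close> with \<open>S 1\<close>, or, if \<open>S 0 = {}\<close>, use the missing dimension to merge \<open>S 1\<close>, \<open>S 2\<close>\<close>
  obtain p q where pq: "p \<in> {0..l}" "q \<in> {0..l}" "p \<noteq> q" "S p \<noteq> {}" "S q \<noteq> {}"
    "card (S p) + card (S q) \<le> CARD('d) - dim (w ` {1..n}) + dim (w ` S p) + dim (w ` S q) + 1"
  proof (cases "S 0 = {}")
    case True
    then show ?thesis using that[of 1 2] not_full D l2 card_S nonempty by force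
  next
    case False
    then show ?thesis using that[of 0 1] D l2 card_S0 card_S nonempty by force
  qed
  moreover have "S j \<subseteq> {1..n}" "block_orthogonal n w (S j)" if "j \<in> {0..l}" for j
    using cover c that by (auto intro: block_orthogonal_if_orthogonal_spans[OF cover])
  ultimately obtain v :: "nat \<Rightarrow> real^'d" where "sphere_config n v" "nonacute_config n v"
      "CE_loss \<tau> n v < CE_loss \<tau> n w"
    using exists_nonacute_config_with_smaller_CE_loss[OF sc nonacute tau, of "S p" "S q"] disj by auto
  with minim show False by (meson not_le)
qed

theorem lemma14:
  fixes n l :: nat and \<tau> :: real
    and w :: "nat \<Rightarrow> real^'d" and S :: "nat \<Rightarrow> nat set"
  assumes dn: "CARD('d) + 2 \<le> n" "n \<le> 2 * CARD('d)"
    and tau: "\<tau> > 0"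
    and smc: "SMC n w"
    and minim: "\<forall>v :: nat \<Rightarrow> real^'d. SMC n v \<longrightarrow> CE_loss \<tau> n w \<le> CE_loss \<tau> n v"
    and cover: "(\<Union>j\<in>{0..l}. S j) = {1..n}"
    and disj: "\<forall>j\<in>{0..l}. \<forall>j'\<in>{0..l}. j \<noteq> j' \<longrightarrow> S j \<inter> S j' = {}"
    and l_ge: "l \<ge> n - CARD('d)"
    and a: "card (S 0) = dim (span (w ` S 0))"
    and b: "\<forall>j\<in>{1..l}. card (S j) = dim (span (w ` S j)) + 1"
    and c: "\<forall>j\<in>{0..l}. \<forall>j'\<in>{0..l}. j \<noteq> j' \<longrightarrow>
              (\<forall>x\<in>span (w ` S j). \<forall>y\<in>span (w ` S j'). orthogonal x y)"
  shows "S 0 = {} \<and> span (w ` {1..n}) = UNIV \<and> l = n - CARD('d)"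
proof -
  have sc: "sphere_config n w" and d1: "1 \<le> delta_cfg n w"
    using smc SMC_iff_delta_cfg_ge_1[OF dn] by auto
  have l2: "2 \<le> l" using dn l_ge by simp
  have "0 \<in> convex hull (w ` S j)" if "j \<in> {1..l}" for j
    using that b cover by (intro zero_in_convex_hull_if_dim_less_card[OF d1 sc]) auto
  then have nonacute: "nonacute_config n w"
    using l2 disj cover
    by (intro nonacute_config_if_zero_in_disjoint_hulls[OF d1 sc, of "S 1" "S 2"]) auto
  have "SMC n v" if "sphere_config n v" "nonacute_config n v" for v :: "nat \<Rightarrow> real^'d"
    using that delta_cfg_ge_1_if_nonacute[OF that(1) _ that(2)] dn SMC_iff_delta_cfg_ge_1[OF dn]
    by simp
  with minim have "S 0 = {} \<and> dim (w ` {1..n}) = CARD('d)"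
    by (intro orthogonal_partition_saturated_if_CE_minimal[OF sc nonacute tau _ cover disj l2 a b c])
      blast
  then show ?thesis
    using card_eq_dim_add_blocks[OF cover disj c a b] dim_eq_full[of "w ` {1..n}"] by simp
qed

end
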